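(* Let $\nu\ge 1/2$ and let $$\mathcal{B}_{\nu}(z)= \sum_{n=0}^\infty \frac{ \Gamma(\nu+1)\,\Gamma\!\left(\frac{n+1}{2}\right)}{\sqrt{\pi}\, n!\, \Gamma\!\left(\frac{n}{2}+\nu+1\right)}\, z^n ,\qquad z\in\mathbb{D}=\{z\in\mathbb{C}:|z|<1\}.$$ Then the function $f(z)=z\mathcal{B}_\nu(z)$ is starlike (univalent) in $\mathbb{D}$. Moreover, $f$ is close-to-convex with respect to the starlike function $g(z)=z$ and also with respect to the starlike function $g(z)=z/(1-z)$.
   Context: $\mathcal{B}_\nu$ is the Bessel–Struve kernel function; $f(z)=z\mathcal{B}_\nu(z)$ satisfies $f(0)=0$, $f'(0)=1$. A function $f$ analytic in $\mathbb{D}$ with $f(0)=0,f'(0)=1$ is starlike if $f$ is univalent and $f(\mathbb{D})$ is starlike with respect to the origin, equivalently $\operatorname{Re}(zf'(z)/f(z))>0$ on $\mathbb{D}$. Given a starlike function $g$, $f$ is close-to-convex with respect to $g$ if there exists a real $\beta$ such that $\operatorname{Re}\left(e^{i\beta}\, z f'(z)/g(z)\right)>0$ for all $z\in\mathbb{D}$. *)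

theory Defs
  imports "HOL-Complex_Analysis.Complex_Analysis"
begin

definition BS_coeff :: "real \<Rightarrow> nat \<Rightarrow> real" where
  "BS_coeff \<nu> n = Gamma (\<nu> + 1) * Gamma ((real n + 1) / 2) /
      (sqrt pi * fact n * Gamma (real n / 2 + \<nu> + 1))"

definition BesselStruve :: "real \<Rightarrow> complex \<Rightarrow> complex" where
  "BesselStruve \<nu> z = (\<Sum>n. complex_of_real (BS_coeff \<nu> n) * z ^ n)"

definition normalized_on_disc :: "(complex \<Rightarrow> complex) \<Rightarrow> bool" where
  "normalized_on_disc f \<longleftrightarrow> f holomorphic_on ball 0 1 \<and> f 0 = 0 \<and> deriv f 0 = 1"

text \<open>Starlike: univalent and Re(z f'(z)/f(z)) > 0 on the disc; at z = 0 the quotient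
  is understood as its (removable) value 1, which is positive, so only z \<noteq> 0 is checked.\<close>
definition starlike_disc :: "(complex \<Rightarrow> complex) \<Rightarrow> bool" where
  "starlike_disc f \<longleftrightarrow> normalized_on_disc f \<and> inj_on f (ball 0 1) \<and>
     (\<forall>z\<in>ball 0 1. z \<noteq> 0 \<longrightarrow> Re (z * deriv f z / f z) > 0)"

text \<open>Close-to-convex with respect to g: some real beta with Re(e^{i beta} z f'(z)/g(z)) > 0
  on the disc; at z = 0 the quotient takes its removable value f'(0)/g'(0).\<close>
definition ctc_quot :: "(complex \<Rightarrow> complex) \<Rightarrow> (complex \<Rightarrow> complex) \<Rightarrow> complex \<Rightarrow> complex" where
  "ctc_quot f g z = (if z = 0 then deriv f 0 / deriv g 0 else z * deriv f z / g z)"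

definition close_to_convex_wrt :: "(complex \<Rightarrow> complex) \<Rightarrow> (complex \<Rightarrow> complex) \<Rightarrow> bool" where
  "close_to_convex_wrt f g \<longleftrightarrow> normalized_on_disc f \<and>
     (\<exists>\<beta>::real. \<forall>z\<in>ball 0 1. Re (exp (\<i> * complex_of_real \<beta>) * ctc_quot f g z) > 0)"

end

theory Submission
  imports Defs
begin

text \<open>By the Beta integral, \<open>BesselStruve \<nu> z = c\<^sub>\<nu> * \<integral>\<^sub>0\<^sup>1 u powr (-1/2) * (1 - u) powr (\<nu> - 1/2) * exp (sqrt u * z) du\<close>,
  and likewise the derivative of \<open>f z = z * BesselStruve \<nu> z\<close> is
  \<open>c\<^sub>\<nu> * (2\<nu> - 1) * \<integral>\<^sub>0\<^sup>1 u powr (1/2) * (1 - u) powr (\<nu> - 3/2) * exp (sqrt u * z) du\<close> for \<open>\<nu> > 1/2\<close>,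
  and \<open>exp z\<close> for \<open>\<nu> = 1/2\<close>. So both are positive averages of the arc \<open>exp (s z)\<close>, \<open>0 \<le> s \<le> 1\<close>.
  For \<open>\<bar>z\<bar> < 1\<close> this arc, rotated by \<open>-Im z / 2\<close>, lies in the sector \<open>\<bar>arg\<bar> \<le> 1/2\<close>, so the
  quotient \<open>z f'(z) / f(z) = f'(z) / BesselStruve \<nu> z\<close> has argument of modulus at most \<open>1 < pi/2\<close>.
  Moreover \<open>Re (exp (s z))\<close> and \<open>Re ((1 - z) exp (s z))\<close> are bounded below by positive constants,
  so \<open>Re f' > 0\<close> (which gives univalence by the Noshiro--Warschawski argument and close-to-convexity
  with respect to \<open>z\<close>) and \<open>Re ((1 - z) f') > 0\<close> (close-to-convexity with respect to \<open>z / (1 - z)\<close>).\<close>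

section \<open>Positive averages of an exponential arc\<close>

text \<open>\<open>exp_cone z F\<close>: \<open>F\<close> is \<open>L > 0\<close> times a point of the closed convex hull of the arc
  \<open>{exp (s z) | 0 \<le> s \<le> 1}\<close>, expressed dually: every lower bound of a real-linear functional
  \<open>Re (c * _)\<close> on the arc, scaled by \<open>L\<close>, bounds it at \<open>F\<close>. This covers integral averages as
  well as the point \<open>exp z\<close> itself.\<close>

definition exp_cone :: "complex \<Rightarrow> complex \<Rightarrow> bool" where
  "exp_cone z F \<longleftrightarrow> (\<exists>L>0. \<forall>c m. (\<forall>s\<in>{0..1}. m \<le> Re (c * exp (of_real s * z))) \<longrightarrow>
      m * L \<le> Re (c * F))"

lemma exp_cone_exp: "exp_cone z (exp z)"
  unfolding exp_cone_def by (intro exI[of _ 1]) (auto dest: bspec[of _ _ 1])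

lemma exp_cone_Re_mult_nonneg:
  assumes "exp_cone z F" and "\<And>s. s \<in> {0..1} \<Longrightarrow> 0 \<le> Re (c * exp (of_real s * z))"
  shows "0 \<le> Re (c * F)"
  using assms unfolding exp_cone_def by (metis mult_zero_left)

lemma exp_cone_Re_mult_pos:
  assumes "exp_cone z F" and "0 < m"
    and "\<And>s. s \<in> {0..1} \<Longrightarrow> m \<le> Re (c * exp (of_real s * z))"
  shows "0 < Re (c * F)"
proof -
  obtain L where "L > 0" and "m * L \<le> Re (c * F)"
    using assms unfolding exp_cone_def by blast
  then show ?thesis using \<open>0 < m\<close> by (smt (verit) mult_pos_pos)
qed

lemma cis_mult_exp_arc:
  "cis (- t * Im z) * exp (of_real s * z) = of_real (exp (s * Re z)) * cis ((s - t) * Im z)"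
  by (simp add: exp_eq_polar cis_mult algebra_simps)

lemma abs_mult_Re_Im_le_one:
  assumes "norm z < 1" and "\<bar>t\<bar> \<le> 1"
  shows "\<bar>t * Re z\<bar> \<le> 1" and "\<bar>t * Im z\<bar> \<le> 1"
  using assms abs_Re_le_cmod[of z] abs_Im_le_cmod[of z]
  by (auto simp: abs_mult intro!: mult_le_one)

lemma cos_one_le_cos:
  fixes x :: real assumes "\<bar>x\<bar> \<le> 1" shows "cos 1 \<le> cos x"
proof -
  have "cos 1 \<le> cos \<bar>x\<bar>" using assms pi_gt3 by (intro cos_monotone_0_pi_le) auto
  then show ?thesis by simp
qed

lemma cos_one_pos: "0 < cos (1::real)"
  using pi_gt3 by (intro cos_gt_zero) auto

lemma Re_cis_mult_exp_arc_ge: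
  assumes "norm z < 1" and "s \<in> {0..1}" and "t \<in> {0..1}"
  shows "exp (-1) * cos 1 \<le> Re (cis (- t * Im z) * exp (of_real s * z))"
proof -
  have "\<bar>s - t\<bar> \<le> 1" using assms(2,3) by auto
  then have "cos 1 \<le> cos ((s - t) * Im z)"
    using abs_mult_Re_Im_le_one[OF assms(1)] by (intro cos_one_le_cos) blast
  moreover have "exp (-1) \<le> exp (s * Re z)"
    using abs_mult_Re_Im_le_one[OF assms(1), of s] assms(2) by auto
  ultimately show ?thesis
    unfolding cis_mult_exp_arc using cos_one_pos by (simp add: mult_mono)
qed

lemma Re_one_minus_mult_exp_arc_ge:
  assumes z: "norm z < 1" and s: "s \<in> {0..1}"
  shows "exp (-1) * ((1 - Re z) * cos 1) \<le> Re ((1 - z) * exp (of_real s * z))"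
proof -
  note bounds = abs_mult_Re_Im_le_one[OF z, of s]
  have Re_lt: "Re z < 1" using z abs_Re_le_cmod[of z] by linarith
  have "0 \<le> Im z * sin (s * Im z)"
  proof (cases "Im z \<ge> 0")
    case True
    then have "0 \<le> sin (s * Im z)" using bounds s pi_gt3 by (intro sin_ge_zero) auto
    then show ?thesis using True by simp
  next
    case False
    then have "0 \<le> sin (-(s * Im z))"
      using bounds s pi_gt3 by (intro sin_ge_zero) (auto simp: mult_nonneg_nonpos)
    then show ?thesis using False by (simp add: mult_nonpos_nonpos)
  qed
  moreover have "(1 - Re z) * cos 1 \<le> (1 - Re z) * cos (s * Im z)"
    using Re_lt bounds s by (intro mult_left_mono cos_one_le_cos) auto
  ultimately have "(1 - Re z) * cos 1 \<le> (1 - Re z) * cos (s * Im z) + Im z * sin (s * Im z)"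
    by linarith
  moreover have "exp (-1) \<le> exp (s * Re z)" using bounds s by auto
  ultimately have "exp (-1) * ((1 - Re z) * cos 1)
      \<le> exp (s * Re z) * ((1 - Re z) * cos (s * Im z) + Im z * sin (s * Im z))"
    using Re_lt cos_one_pos by (intro mult_mono) auto
  also have "\<dots> = Re ((1 - z) * exp (of_real s * z))"
    by (simp add: Re_exp Im_exp algebra_simps)
  finally show ?thesis .
qed

lemma exp_cone_Re_pos:
  assumes "norm z < 1" and "exp_cone z F"
  shows "0 < Re F"
  using exp_cone_Re_mult_pos[OF assms(2), of "exp (-1) * cos 1" 1]
    Re_cis_mult_exp_arc_ge[OF assms(1), of _ 0] cos_one_pos
  by simp

lemma exp_cone_Re_one_minus_mult_pos:
  assumes "norm z < 1" and "exp_cone z F"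
  shows "0 < Re ((1 - z) * F)"
proof (rule exp_cone_Re_mult_pos[OF assms(2) _ Re_one_minus_mult_exp_arc_ge[OF assms(1)]])
  show "0 < exp (-1) * ((1 - Re z) * cos 1)"
    using assms(1) abs_Re_le_cmod[of z] cos_one_pos by simp
qed

lemma Re_divide_pos_of_sector:
  fixes a b :: complex and C S :: real
  assumes "0 \<le> S" and "S < C"
    and a: "C * \<bar>Im a\<bar> \<le> S * Re a" "0 < Re a"
    and b: "C * \<bar>Im b\<bar> \<le> S * Re b" "0 < Re b"
  shows "0 < Re (a / b)"
proof -
  have "C\<^sup>2 * \<bar>Im a * Im b\<bar> = (C * \<bar>Im a\<bar>) * (C * \<bar>Im b\<bar>)"
    by (simp add: power2_eq_square abs_mult mult_ac)
  also have "\<dots> \<le> (S * Re a) * (S * Re b)"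
    using assms by (intro mult_mono[OF a(1) b(1)] mult_nonneg_nonneg) auto
  also have "\<dots> = S\<^sup>2 * (Re a * Re b)" by (simp add: power2_eq_square mult_ac)
  also have "\<dots> < C\<^sup>2 * (Re a * Re b)"
    using assms by (intro mult_strict_right_mono power_strict_mono) auto
  finally have "\<bar>Im a * Im b\<bar> < Re a * Re b"
    using assms by (simp add: mult_less_cancel_left_pos)
  then have "0 < Re a * Re b + Im a * Im b" by linarith
  moreover have "0 < (Re b)\<^sup>2 + (Im b)\<^sup>2" using b by (simp add: add_pos_nonneg)
  ultimately show ?thesis by (simp add: Re_divide)
qed

lemma sin_half_lt_cos_half: "sin (1/2 :: real) < cos (1/2)"
proof -
  have "0 < sin (1/2 :: real)" "0 < cos (1/2 :: real)"
    using pi_gt3 by (auto intro!: sin_gt_zero cos_gt_zero)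
  moreover have "(sin (1/2 :: real))\<^sup>2 < (cos (1/2))\<^sup>2"
    using cos_double[of "1/2 :: real"] cos_one_pos by simp
  ultimately show ?thesis by (simp add: power2_less_imp_less)
qed

text \<open>After the rotation by \<open>cis (- Im z / 2)\<close> the arc \<open>exp (s z)\<close>, \<open>0 \<le> s \<le> 1\<close>, lies in the
  sector \<open>\<bar>arg\<bar> \<le> 1/2\<close>, which is cut out by the two half-planes below.\<close>
lemma exp_arc_sector:
  assumes z: "norm z < 1" and s: "s \<in> {0..1}"
  defines "v \<equiv> cis (- Im z / 2) * exp (of_real s * z)"
  shows "0 \<le> Re (\<i> * cis (- 1/2) * v)" and "0 \<le> Re (- \<i> * cis (1/2) * v)"
proof -
  define \<phi> where "\<phi> = (s - 1/2) * Im z"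
  have "\<bar>s - 1/2\<bar> \<le> 1/2" using s by (auto simp: abs_if)
  then have "\<bar>(s - 1/2) * Im z\<bar> \<le> 1/2 * 1"
    unfolding abs_mult using z abs_Im_le_cmod[of z] by (intro mult_mono) auto
  then have \<phi>: "- (1/2) \<le> \<phi>" "\<phi> \<le> 1/2" unfolding \<phi>_def by linarith+
  have v: "v = of_real (exp (s * Re z)) * cis \<phi>"
    unfolding v_def \<phi>_def using cis_mult_exp_arc[of "1/2" z s] by simp
  have "Re (\<i> * cis (- 1/2) * v) = exp (s * Re z) * sin (1/2 - \<phi>)"
    by (simp add: v cis_mult sin_diff cos_diff algebra_simps)
  moreover have "Re (- \<i> * cis (1/2) * v) = exp (s * Re z) * sin (1/2 + \<phi>)"
    by (simp add: v cis_mult sin_add cos_add algebra_simps)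
  ultimately show "0 \<le> Re (\<i> * cis (- 1/2) * v)" and "0 \<le> Re (- \<i> * cis (1/2) * v)"
    using \<phi> pi_gt3 by (auto intro!: mult_nonneg_nonneg sin_ge_zero)
qed

lemma exp_cone_sector:
  assumes z: "norm z < 1" and F: "exp_cone z F"
  defines "w \<equiv> cis (- Im z / 2)"
  shows "cos (1/2) * \<bar>Im (w * F)\<bar> \<le> sin (1/2) * Re (w * F)" and "0 < Re (w * F)"
proof -
  have "0 \<le> Re ((\<i> * cis (- 1/2) * w) * F)"
    using exp_cone_Re_mult_nonneg[OF F] exp_arc_sector(1)[OF z] unfolding w_def
    by (metis mult.assoc)
  moreover have "0 \<le> Re ((- \<i> * cis (1/2) * w) * F)"
    using exp_cone_Re_mult_nonneg[OF F] exp_arc_sector(2)[OF z] unfolding w_def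
    by (metis mult.assoc)
  ultimately have "0 \<le> sin (1/2) * Re (w * F) - cos (1/2) * Im (w * F)"
    "0 \<le> sin (1/2) * Re (w * F) + cos (1/2) * Im (w * F)"
    by (simp_all add: algebra_simps)
  then show "cos (1/2) * \<bar>Im (w * F)\<bar> \<le> sin (1/2) * Re (w * F)"
    by (smt (verit) abs_of_nonneg abs_of_nonpos mult_minus_right)
  show "0 < Re (w * F)"
  proof (rule exp_cone_Re_mult_pos[OF F])
    show "0 < exp (-1) * cos (1::real)" using cos_one_pos by simp
    fix s :: real assume "s \<in> {0..1}"
    then show "exp (-1) * cos 1 \<le> Re (w * exp (of_real s * z))"
      using Re_cis_mult_exp_arc_ge[OF z, of s "1/2"] unfolding w_def by simp
  qed
qed

lemma exp_cone_Re_divide_pos: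
  assumes z: "norm z < 1" and "exp_cone z N" and "exp_cone z D"
  shows "0 < Re (N / D)"
proof -
  define w where "w = cis (- Im z / 2)"
  have "0 < Re ((w * N) / (w * D))"
    using exp_cone_sector[OF z assms(2)] exp_cone_sector[OF z assms(3)]
      sin_half_lt_cos_half pi_gt3
    unfolding w_def by (intro Re_divide_pos_of_sector) (auto intro!: sin_ge_zero)
  moreover have "w \<noteq> 0" unfolding w_def by simp
  ultimately show ?thesis by simp
qed

section \<open>Moment series\<close>

lemma exp_sums:
  fixes x :: "'a::{real_normed_field,banach}"
  shows "(\<lambda>n. x ^ n / fact n) sums exp x"
  using exp_converges[of x] by (simp add: scaleR_conv_of_real divide_inverse mult.commute)

lemma norm_exp_partial_sum_le:
  fixes w :: "'a::{real_normed_field,banach}"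
  shows "norm (\<Sum>n<k. w ^ n / fact n) \<le> exp (norm w)"
proof -
  have "norm (\<Sum>n<k. w ^ n / fact n) \<le> (\<Sum>n<k. norm w ^ n / fact n)"
    by (rule order_trans[OF norm_sum]) (simp add: norm_divide norm_power)
  also have "\<dots> \<le> exp (norm w)"
    using sum_le_suminf[OF sums_summable[OF exp_sums[of "norm w"]], of "{..<k}"]
      sums_unique[OF exp_sums[of "norm w"]]
    by auto
  finally show ?thesis .
qed

lemma moment_series_has_integral:
  fixes \<rho> :: "real \<Rightarrow> real" and M :: "nat \<Rightarrow> real" and z :: complex
  assumes nonneg: "\<And>u. u \<in> {0..1} \<Longrightarrow> 0 \<le> \<rho> u"
    and moment: "\<And>n. ((\<lambda>u. \<rho> u * sqrt u ^ n) has_integral M n) {0..1}"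
  obtains S where "(\<lambda>n. of_real (M n / fact n) * z ^ n) sums S"
    and "((\<lambda>u. of_real (\<rho> u) * exp (of_real (sqrt u) * z)) has_integral S) {0..1}"
proof -
  define F where "F k u = of_real (\<rho> u) * (\<Sum>n<k. (of_real (sqrt u) * z) ^ n / fact n)" for k u
  have F_integral: "(F k has_integral (\<Sum>n<k. of_real (M n / fact n) * z ^ n)) {0..1}" for k
  proof -
    have "((\<lambda>u. of_real (\<rho> u * sqrt u ^ n) * (z ^ n / fact n)) has_integral
            of_real (M n / fact n) * z ^ n) {0..1}" for n
      using has_integral_mult_left[OF has_integral_of_real[OF moment[of n]], of "z ^ n / fact n"]
      by (simp add: divide_inverse mult_ac)
    then show ?thesis
      unfolding F_def by (simp add: sum_distrib_left power_mult_distrib mult_ac has_integral_sum)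
  qed
  have F_bound: "norm (F k u) \<le> \<rho> u * exp (norm z)" if u: "u \<in> {0..1}" for k u
  proof -
    have "norm (F k u) = \<rho> u * norm (\<Sum>n<k. (of_real (sqrt u) * z) ^ n / fact n)"
      unfolding F_def norm_mult using nonneg[OF u] by simp
    also have "\<dots> \<le> \<rho> u * exp (norm (of_real (sqrt u) * z))"
      by (rule mult_left_mono[OF norm_exp_partial_sum_le nonneg[OF u]])
    also have "\<dots> \<le> \<rho> u * exp (norm z)"
      using u nonneg[OF u] by (intro mult_left_mono) (auto simp: norm_mult mult_left_le_one_le)
    finally show ?thesis .
  qed
  have F_limit: "(\<lambda>k. F k u) \<longlonglongrightarrow> of_real (\<rho> u) * exp (of_real (sqrt u) * z)" for u
    unfolding F_def
    using exp_sums[of "of_real (sqrt u) * z"] by (intro tendsto_mult_left) (simp add: sums_def)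
  have "(\<lambda>u. \<rho> u * exp (norm z)) integrable_on {0..1}"
    using has_integral_mult_left[OF moment[of 0], of "exp (norm z)"] by auto
  note dominated = dominated_convergence[OF has_integral_integrable[OF F_integral] this F_bound F_limit]
  define S where "S = integral {0..1} (\<lambda>u. of_real (\<rho> u) * exp (of_real (sqrt u) * z))"
  have "(\<lambda>n. of_real (M n / fact n) * z ^ n) sums S"
    using dominated(2) integral_unique[OF F_integral] by (simp add: sums_def S_def)
  with dominated(1) show ?thesis by (intro that) (auto simp: S_def)
qed

lemma exp_cone_moment_series:
  fixes \<rho> :: "real \<Rightarrow> real" and M :: "nat \<Rightarrow> real" and z :: complex
  assumes nonneg: "\<And>u. u \<in> {0..1} \<Longrightarrow> 0 \<le> \<rho> u"
    and moment: "\<And>n. ((\<lambda>u. \<rho> u * sqrt u ^ n) has_integral M n) {0..1}"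
    and "0 < M 0"
  shows "summable (\<lambda>n. of_real (M n / fact n) * z ^ n)"
    and "exp_cone z (\<Sum>n. of_real (M n / fact n) * z ^ n)"
proof -
  obtain S where sums: "(\<lambda>n. of_real (M n / fact n) * z ^ n) sums S"
    and integral: "((\<lambda>u. of_real (\<rho> u) * exp (of_real (sqrt u) * z)) has_integral S) {0..1}"
    using moment_series_has_integral[OF nonneg moment] .
  show "summable (\<lambda>n. of_real (M n / fact n) * z ^ n)" using sums by (rule sums_summable)
  have "m * M 0 \<le> Re (c * S)" if bound: "\<forall>s\<in>{0..1}. m \<le> Re (c * exp (of_real s * z))" for c m
  proof (rule has_integral_le)
    show "((\<lambda>u. m * \<rho> u) has_integral m * M 0) {0..1}"
      using has_integral_mult_right[OF moment[of 0], of m] by simp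
    show "((\<lambda>u. Re (c * (of_real (\<rho> u) * exp (of_real (sqrt u) * z)))) has_integral Re (c * S)) {0..1}"
      using has_integral_Re[OF has_integral_mult_right[OF integral]] .
    fix u :: real assume u: "u \<in> {0..1}"
    then have "m \<le> Re (c * exp (of_real (sqrt u) * z))" using bound by auto
    then have "m * \<rho> u \<le> Re (c * exp (of_real (sqrt u) * z)) * \<rho> u"
      using nonneg[OF u] by (rule mult_right_mono)
    then show "m * \<rho> u \<le> Re (c * (of_real (\<rho> u) * exp (of_real (sqrt u) * z)))"
      by (simp add: mult.left_commute[of c] mult.commute)
  qed
  then show "exp_cone z (\<Sum>n. of_real (M n / fact n) * z ^ n)"
    unfolding exp_cone_def sums_unique[OF sums, symmetric] using \<open>0 < M 0\<close> by blast
qed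

lemma has_integral_Beta_sqrt_moment:
  fixes a b :: real
  assumes "0 < a" and "0 < b"
  shows "((\<lambda>u. u powr (a - 1) * (1 - u) powr (b - 1) * sqrt u ^ n) has_integral
      Beta (a + real n / 2) b) {0..1}"
proof (rule has_integral_eq[OF _ has_integral_Beta_real])
  fix u :: real assume "u \<in> {0..1}"
  then consider "u = 0" | "0 < u" by fastforce
  then show "u powr (a + real n / 2 - 1) * (1 - u) powr (b - 1) =
      u powr (a - 1) * (1 - u) powr (b - 1) * sqrt u ^ n"
  proof cases
    case 2
    then have "sqrt u ^ n = u powr (real n / 2)"
      by (simp add: powr_half_sqrt[symmetric] powr_realpow[symmetric] powr_powr)
    with 2 show ?thesis by (simp add: powr_add[symmetric] algebra_simps)
  qed simp
qed (use assms in auto)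

lemma exp_cone_Beta_series:
  fixes a b c :: real
  assumes "0 < a" and "0 < b" and "0 < c"
  shows "summable (\<lambda>n. of_real (c * Beta (a + real n / 2) b / fact n) * z ^ n)"
    and "exp_cone z (\<Sum>n. of_real (c * Beta (a + real n / 2) b / fact n) * z ^ n)"
proof -
  have "0 < Beta a b" using assms by (simp add: Beta_def)
  moreover have "((\<lambda>u. c * (u powr (a - 1) * (1 - u) powr (b - 1)) * sqrt u ^ n) has_integral
      c * Beta (a + real n / 2) b) {0..1}" for n
    using has_integral_mult_right[OF has_integral_Beta_sqrt_moment[OF assms(1,2)], of c]
    by (simp add: mult_ac)
  ultimately show "summable (\<lambda>n. of_real (c * Beta (a + real n / 2) b / fact n) * z ^ n)"
    and "exp_cone z (\<Sum>n. of_real (c * Beta (a + real n / 2) b / fact n) * z ^ n)"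
    using exp_cone_moment_series[where \<rho> = "\<lambda>u. c * (u powr (a - 1) * (1 - u) powr (b - 1))"
        and M = "\<lambda>n. c * Beta (a + real n / 2) b"] \<open>0 < c\<close>
    by auto
qed

section \<open>The Bessel--Struve kernel\<close>

text \<open>The constant \<open>c\<^sub>\<nu>\<close> of the Beta-integral representation of \<open>BesselStruve \<nu>\<close>.\<close>
definition BesselStruve_const :: "real \<Rightarrow> real" where
  "BesselStruve_const \<nu> = Gamma (\<nu> + 1) / (sqrt pi * Gamma (\<nu> + 1/2))"

lemma BesselStruve_const_pos: "\<nu> > -1/2 \<Longrightarrow> 0 < BesselStruve_const \<nu>"
  unfolding BesselStruve_const_def by (intro divide_pos_pos mult_pos_pos Gamma_real_pos) auto

lemma BS_coeff_0: "\<nu> > -1 \<Longrightarrow> BS_coeff \<nu> 0 = 1"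
proof -
  assume "\<nu> > -1"
  then have "Gamma (\<nu> + 1) \<noteq> 0" by (simp add: Gamma_real_pos less_imp_neq[symmetric])
  then show ?thesis by (simp add: BS_coeff_def Gamma_one_half_real)
qed

lemma BS_coeff_eq_Beta:
  assumes "\<nu> > -1/2"
  shows "BS_coeff \<nu> n = BesselStruve_const \<nu> * Beta (1/2 + real n / 2) (\<nu> + 1/2) / fact n"
proof -
  have "Gamma ((real n + 1) / 2) = Gamma (1/2 + real n / 2)"
    "Gamma (1/2 + real n / 2 + (\<nu> + 1/2)) = Gamma (real n / 2 + \<nu> + 1)"
    by (simp_all add: add_divide_distrib add_ac)
  moreover have "Gamma (\<nu> + 1/2) \<noteq> 0" using assms by (simp add: Gamma_real_pos less_imp_neq[symmetric])
  ultimately show ?thesis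
    unfolding BS_coeff_def BesselStruve_const_def Beta_def by simp
qed

lemma Gamma_plus1_real: "(x::real) > 0 \<Longrightarrow> Gamma (x + 1) = x * Gamma x"
  by (rule Gamma_plus1) (auto dest: nonpos_Ints_nonpos)

lemma Suc_mult_BS_coeff_eq_Beta:
  assumes "\<nu> > 1/2"
  shows "real (Suc n) * BS_coeff \<nu> n =
    BesselStruve_const \<nu> * (2 * \<nu> - 1) * Beta (3/2 + real n / 2) (\<nu> - 1/2) / fact n"
proof -
  define G where "G = Gamma ((real n + 1) / 2)"
  define H where "H = Gamma (\<nu> - 1/2)"
  have G: "Gamma (3/2 + real n / 2) = real (Suc n) / 2 * G"
    using Gamma_plus1_real[of "(real n + 1) / 2"] by (simp add: G_def add_divide_distrib add_ac)
  have H: "Gamma (\<nu> + 1/2) = (\<nu> - 1/2) * H"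
    using Gamma_plus1_real[of "\<nu> - 1/2"] assms by (simp add: H_def add_ac)
  have Gamma_sum: "Gamma (3/2 + real n / 2 + (\<nu> - 1/2)) = Gamma (real n / 2 + \<nu> + 1)"
    by (simp add: add_ac)
  define Q where "Q = Gamma (real n / 2 + \<nu> + 1)"
  have "H \<noteq> 0" "Q \<noteq> 0"
    using assms by (simp_all add: H_def Q_def Gamma_real_pos less_imp_neq[symmetric])
  then show ?thesis
    using assms
    unfolding BS_coeff_def BesselStruve_const_def Beta_def G_def[symmetric] G H Gamma_sum
      H_def[symmetric] Q_def[symmetric]
    by (simp add: field_simps)
qed

lemma Suc_mult_BS_coeff_half: "real (Suc n) * BS_coeff (1/2) n = 1 / fact n"
proof -
  define G where "G = Gamma ((real n + 1) / 2)"
  have G: "Gamma (real n / 2 + 1/2 + 1) = real (Suc n) / 2 * G"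
    using Gamma_plus1_real[of "(real n + 1) / 2"] by (simp add: G_def add_divide_distrib add_ac)
  have half: "Gamma (1/2 + 1 :: real) = sqrt pi / 2"
    using Gamma_plus1_real[of "1/2"] by (simp add: Gamma_one_half_real)
  have "G \<noteq> 0" by (simp add: G_def Gamma_real_pos less_imp_neq[symmetric])
  moreover have "real (Suc n) \<noteq> 0" by simp
  ultimately show ?thesis
    unfolding BS_coeff_def G_def[symmetric] G half by (simp add: divide_simps)
qed

lemma BesselStruve_exp_cone:
  assumes "\<nu> > -1/2"
  shows "summable (\<lambda>n. of_real (BS_coeff \<nu> n) * z ^ n)" and "exp_cone z (BesselStruve \<nu> z)"
  using exp_cone_Beta_series[of "1/2" "\<nu> + 1/2" "BesselStruve_const \<nu>" z]
    BesselStruve_const_pos[OF assms] assms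
  by (simp_all add: BesselStruve_def BS_coeff_eq_Beta[OF assms])

definition BesselStruve_zderiv :: "real \<Rightarrow> complex \<Rightarrow> complex" where
  "BesselStruve_zderiv \<nu> z = (\<Sum>n. of_real (real (Suc n) * BS_coeff \<nu> n) * z ^ n)"

lemma BesselStruve_zderiv_0: "\<nu> > -1 \<Longrightarrow> BesselStruve_zderiv \<nu> 0 = 1"
  using powser_zero[of "\<lambda>n. of_real (real (Suc n) * BS_coeff \<nu> n) :: complex"]
  by (simp add: BesselStruve_zderiv_def BS_coeff_0)

lemma has_field_derivative_z_BesselStruve:
  assumes "\<nu> > -1/2"
  shows "((\<lambda>z. z * BesselStruve \<nu> z) has_field_derivative BesselStruve_zderiv \<nu> z) (at z)"
proof -
  define a where "a n = (if n = 0 then 0 else of_real (BS_coeff \<nu> (n - 1)) :: complex)" for n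
  have sums: "(\<lambda>n. a n * w ^ n) sums (w * BesselStruve \<nu> w)" for w
  proof -
    have "(\<lambda>n. a (Suc n) * w ^ Suc n) sums (w * BesselStruve \<nu> w)"
      using sums_mult[OF summable_sums[OF BesselStruve_exp_cone(1)[OF assms, of w]], of w]
      by (simp add: a_def BesselStruve_def mult_ac)
    from sums_Suc_iff[of "\<lambda>n. a n * w ^ n", THEN iffD1, OF this] show ?thesis
      by (simp add: a_def)
  qed
  then have "(\<lambda>z. z * BesselStruve \<nu> z) = (\<lambda>z. \<Sum>n. a n * z ^ n)"
    by (auto simp: sums_unique)
  moreover have "diffs a = (\<lambda>n. of_real (real (Suc n) * BS_coeff \<nu> n))"
    by (auto simp: diffs_def a_def)
  ultimately show ?thesis
    using termdiffs_strong_converges_everywhere[of a z] sums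
    by (auto simp: BesselStruve_zderiv_def intro: sums_summable)
qed

lemma BesselStruve_zderiv_exp_cone:
  assumes "\<nu> \<ge> 1/2"
  shows "exp_cone z (BesselStruve_zderiv \<nu> z)"
proof (cases "\<nu> = 1/2")
  case True
  then have "BesselStruve_zderiv \<nu> z = exp z"
    unfolding BesselStruve_zderiv_def True Suc_mult_BS_coeff_half
    using sums_unique[OF exp_sums[of z]] by (simp add: field_simps)
  then show ?thesis by (simp add: exp_cone_exp)
next
  case False
  then have "\<nu> > 1/2" using assms by simp
  then show ?thesis
    unfolding BesselStruve_zderiv_def Suc_mult_BS_coeff_eq_Beta[OF \<open>\<nu> > 1/2\<close>]
    using BesselStruve_const_pos[of \<nu>] by (intro exp_cone_Beta_series(2)) auto
qed

section \<open>Univalence and close-to-convexity\<close>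

lemma inj_on_Re_deriv_pos:
  fixes f f' :: "complex \<Rightarrow> complex"
  assumes "convex S"
    and deriv: "\<And>z. z \<in> S \<Longrightarrow> (f has_field_derivative f' z) (at z)"
    and pos: "\<And>z. z \<in> S \<Longrightarrow> 0 < Re (f' z)"
  shows "inj_on f S"
proof (rule inj_onI, rule ccontr)
  fix a b assume a: "a \<in> S" and b: "b \<in> S" and eq: "f a = f b" and "a \<noteq> b"
  have segment: "closed_segment a b \<subseteq> S"
    using assms(1) a b by (simp add: closed_segment_subset)
  obtain u where u: "u \<in> closed_segment a b"
    and mvt: "Re (f b * cnj (b - a)) - Re (f a * cnj (b - a)) = Re (f' u * cnj (b - a) * (b - a))"
    using complex_mvt_line[of a b "\<lambda>w. f w * cnj (b - a)" "\<lambda>u. f' u * cnj (b - a)"]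
      segment deriv by (blast intro: DERIV_cmult_right)
  have "cnj (b - a) * (b - a) = of_real ((norm (b - a))\<^sup>2)"
    using complex_norm_square[of "b - a"] by (simp add: mult.commute)
  then have "f' u * cnj (b - a) * (b - a) = f' u * of_real ((norm (b - a))\<^sup>2)"
    by (simp only: mult.assoc)
  note norm_sq = this
  have "Re (f' u * cnj (b - a) * (b - a)) = Re (f' u) * (norm (b - a))\<^sup>2"
    unfolding norm_sq by simp
  moreover have "0 < Re (f' u) * (norm (b - a))\<^sup>2"
    using pos u segment \<open>a \<noteq> b\<close> by auto
  ultimately show False using mvt unfolding eq by linarith
qed

lemma starlike_disc_id: "starlike_disc (\<lambda>z. z)"
  unfolding starlike_disc_def normalized_on_disc_def by auto

lemma deriv_z_div_one_minus_z:
  fixes z :: complex assumes "z \<noteq> 1"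
  shows "deriv (\<lambda>z. z / (1 - z)) z = 1 / (1 - z)\<^sup>2"
  using assms
  by (intro DERIV_imp_deriv) (auto intro!: derivative_eq_intros simp: field_simps power2_eq_square)

lemma inj_on_z_div_one_minus_z: "inj_on (\<lambda>z::complex. z / (1 - z)) (ball 0 1)"
proof (rule inj_onI)
  fix z w :: complex
  assume "z \<in> ball 0 1" "w \<in> ball 0 1" and eq: "z / (1 - z) = w / (1 - w)"
  then have "1 - z \<noteq> 0" "1 - w \<noteq> 0" by auto
  with eq have "z * (1 - w) = w * (1 - z)" by (simp add: divide_eq_eq eq_divide_eq)
  then show "z = w" by (simp add: algebra_simps)
qed

lemma starlike_disc_z_div_one_minus_z: "starlike_disc (\<lambda>z. z / (1 - z))"
  unfolding starlike_disc_def normalized_on_disc_def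
proof (intro conjI ballI impI)
  show "(\<lambda>z. z / (1 - z)) holomorphic_on ball 0 1" by (intro holomorphic_intros) auto
  show "deriv (\<lambda>z. z / (1 - z)) 0 = 1" by (simp add: deriv_z_div_one_minus_z)
  show "inj_on (\<lambda>z::complex. z / (1 - z)) (ball 0 1)" by (rule inj_on_z_div_one_minus_z)
  fix z :: complex assume z: "z \<in> ball 0 1" "z \<noteq> 0"
  then have "1 - z \<noteq> 0" by auto
  then have "z * deriv (\<lambda>z. z / (1 - z)) z / (z / (1 - z)) = 1 / (1 - z)"
    using z by (simp add: deriv_z_div_one_minus_z power2_eq_square)
  moreover have "0 < Re (1 - z)" using z abs_Re_le_cmod[of z] by simp
  ultimately show "0 < Re (z * deriv (\<lambda>z. z / (1 - z)) z / (z / (1 - z)))"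
    by (simp add: Re_divide add_pos_nonneg)
qed simp

lemma close_to_convex_wrt_id:
  assumes "normalized_on_disc f" and "\<And>z. z \<in> ball 0 1 \<Longrightarrow> 0 < Re (deriv f z)"
  shows "close_to_convex_wrt f (\<lambda>z. z)"
  unfolding close_to_convex_wrt_def
  using assms by (intro conjI exI[of _ 0]) (auto simp: ctc_quot_def)

lemma close_to_convex_wrt_z_div_one_minus_z:
  assumes "normalized_on_disc f" and "\<And>z. z \<in> ball 0 1 \<Longrightarrow> 0 < Re ((1 - z) * deriv f z)"
  shows "close_to_convex_wrt f (\<lambda>z. z / (1 - z))"
  unfolding close_to_convex_wrt_def
proof (intro conjI exI[of _ 0] ballI)
  fix z :: complex assume z: "z \<in> ball 0 1"
  then have "z \<noteq> 1" by auto
  then have "ctc_quot f (\<lambda>z. z / (1 - z)) z = (1 - z) * deriv f z"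
    by (simp add: ctc_quot_def deriv_z_div_one_minus_z field_simps)
  then show "0 < Re (exp (\<i> * of_real 0) * ctc_quot f (\<lambda>z. z / (1 - z)) z)"
    using assms(2)[OF z] by simp
qed (use assms in simp)

theorem theorem3:
  fixes \<nu> :: real
  assumes "\<nu> \<ge> 1/2"
  shows "starlike_disc (\<lambda>z. z * BesselStruve \<nu> z)
    \<and> starlike_disc (\<lambda>z. z)
    \<and> close_to_convex_wrt (\<lambda>z. z * BesselStruve \<nu> z) (\<lambda>z. z)
    \<and> starlike_disc (\<lambda>z. z / (1 - z))
    \<and> close_to_convex_wrt (\<lambda>z. z * BesselStruve \<nu> z) (\<lambda>z. z / (1 - z))"
proof -
  let ?f = "\<lambda>z. z * BesselStruve \<nu> z"
  have \<nu>: "\<nu> > -1/2" using assms by simp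
  note has_deriv = has_field_derivative_z_BesselStruve[OF \<nu>]
  have deriv: "deriv ?f z = BesselStruve_zderiv \<nu> z" for z
    using has_deriv by (rule DERIV_imp_deriv)
  have normalized: "normalized_on_disc ?f"
    unfolding normalized_on_disc_def deriv using \<nu> has_deriv
    by (auto simp: holomorphic_on_def field_differentiable_def BesselStruve_zderiv_0
        intro: has_field_derivative_at_within)
  have cone: "exp_cone z (BesselStruve_zderiv \<nu> z)" for z
    using BesselStruve_zderiv_exp_cone[OF assms] .
  have "starlike_disc ?f"
    unfolding starlike_disc_def
  proof (intro conjI normalized ballI impI)
    show "inj_on ?f (ball 0 1)"
      using has_deriv exp_cone_Re_pos[OF _ cone] by (intro inj_on_Re_deriv_pos) auto
    fix z :: complex assume "z \<in> ball 0 1" "z \<noteq> 0"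
    then show "0 < Re (z * deriv ?f z / ?f z)"
      using exp_cone_Re_divide_pos[OF _ cone BesselStruve_exp_cone(2)[OF \<nu>]] by (simp add: deriv)
  qed
  moreover have "close_to_convex_wrt ?f (\<lambda>z. z)"
    using exp_cone_Re_pos[OF _ cone] by (intro close_to_convex_wrt_id normalized) (simp add: deriv)
  moreover have "close_to_convex_wrt ?f (\<lambda>z. z / (1 - z))"
    using exp_cone_Re_one_minus_mult_pos[OF _ cone]
    by (intro close_to_convex_wrt_z_div_one_minus_z normalized) (simp add: deriv)
  ultimately show ?thesis using starlike_disc_id starlike_disc_z_div_one_minus_z by blast
qed

end
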